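(* Let $d\geq 2$, let $\mathsf{B}$ be a stacked $(d+1)$-ball on $n$ vertices and let $\mathsf{K}=\partial\mathsf{B}$. Then $\tau(\mathcal{F}(\mathsf{B}))\leq \frac{1}{d+2}n$ and $\tau(\mathcal{F}(\mathsf{K}))\leq \frac{2}{d+2}n$. Furthermore, $\mathcal{F}(\mathsf{B})$ and $\mathcal{F}(\mathsf{K})$ are both $2$-colorable.
   Context: An abstract $m$-simplex $\Delta(V)$ is the set of all subsets of a set $V$ of size $m+1$. A simplicial complex $\mathsf{B}$ is a stacked $(d+1)$-ball if there are abstract $(d+1)$-simplices $\Delta_1,\dots,\Delta_m$ with $\mathsf{B}=\bigcup_{i=1}^m\Delta_i$ such that, writing $\mathsf{B}_k=\bigcup_{i=1}^k\Delta_i$, for every $1\leq k\leq m-1$ the intersection $\mathsf{B}_k\cap\Delta_{k+1}$ is an abstract $d$-simplex whose maximal face is a $d$-dimensional face of both $\partial\mathsf{B}_k$ and $\Delta_{k+1}$. The boundary $\partial\mathsf{B}$ of such a ball is the subcomplex generated by the $d$-dimensional faces contained in exactly one $(d+1)$-simplex $\Delta_i$. $\mathcal{F}(\cdot)$ is the hypergraph of facets (inclusion-maximal faces); $\tau$ is the minimum size of a vertex set meeting every hyperedge; $2$-colorable means the vertices can be $2$-colored with no monochromatic hyperedge. *)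

theory Defs
  imports Complex_Main
begin

definition simplex :: "'a set \<Rightarrow> 'a set set" where
  "simplex V = Pow V"

definition partial_ball :: "'a set list \<Rightarrow> nat \<Rightarrow> 'a set set" where
  "partial_ball Vs k = (\<Union>i\<in>{..<k}. simplex (Vs ! i))"

definition boundary_faces :: "nat \<Rightarrow> 'a set list \<Rightarrow> nat \<Rightarrow> 'a set set" where
  "boundary_faces d Vs k =
     {\<sigma>. \<sigma> \<in> partial_ball Vs k \<and> finite \<sigma> \<and> card \<sigma> = d + 1 \<and>
          card {i. i < k \<and> \<sigma> \<subseteq> Vs ! i} = 1}"

definition boundary :: "nat \<Rightarrow> 'a set list \<Rightarrow> nat \<Rightarrow> 'a set set" where
  "boundary d Vs k = (\<Union>\<sigma>\<in>boundary_faces d Vs k. simplex \<sigma>)"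

text \<open>The list Vs of vertex sets of (d+1)-simplices Delta_1,...,Delta_m is a stacking
  sequence of a stacked (d+1)-ball (0-indexed: Delta_(k+1) = Vs ! k).\<close>
definition stacked_ball_seq :: "nat \<Rightarrow> 'a set list \<Rightarrow> bool" where
  "stacked_ball_seq d Vs \<longleftrightarrow>
     Vs \<noteq> [] \<and>
     (\<forall>V\<in>set Vs. finite V \<and> card V = d + 2) \<and>
     (\<forall>k. 1 \<le> k \<and> k < length Vs \<longrightarrow>
        (\<exists>W. finite W \<and> card W = d + 1 \<and>
             partial_ball Vs k \<inter> simplex (Vs ! k) = simplex W \<and>
             W \<in> boundary d Vs k \<and> W \<subseteq> Vs ! k))"

definition facets :: "'a set set \<Rightarrow> 'a set set" where
  "facets C = {F \<in> C. \<forall>G\<in>C. F \<subseteq> G \<longrightarrow> G = F}"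

definition tau :: "'a set set \<Rightarrow> nat" where
  "tau H = (LEAST k. \<exists>T. finite T \<and> card T = k \<and> (\<forall>e\<in>H. T \<inter> e \<noteq> {}))"

definition two_colorable :: "'a set set \<Rightarrow> bool" where
  "two_colorable H \<longleftrightarrow> (\<exists>c :: 'a \<Rightarrow> bool. \<forall>e\<in>H. \<exists>x\<in>e. \<exists>y\<in>e. c x \<noteq> c y)"

end

theory Submission
  imports Defs
begin

text \<open>
  Colour the vertices of a stacked \<open>(d+1)\<close>-ball with \<open>d + 2\<close> colours so that every simplex
  \<open>\<Delta>\<^sub>i\<close> is rainbow. This is possible by induction along the stacking order: \<open>\<Delta>\<^sub>k\<^sub>+\<^sub>1\<close>
  meets the earlier simplices only in a \<open>d\<close>-face, so it has exactly one new vertex, which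
  receives the one colour missing on that face. Every facet of \<open>B\<close> then sees all colours and every
  facet of \<open>\<partial>B\<close> (a \<open>d\<close>-face of some \<open>\<Delta>\<^sub>i\<close>) misses at most one. Hence the smallest colour
  class is a transversal of \<open>\<F>(B)\<close> and the two smallest together form one of \<open>\<F>(\<partial>B)\<close>;
  splitting the colours as \<open>{0,1}\<close> against the rest gives a proper 2-colouring of both
  hypergraphs, since \<open>d \<ge> 2\<close> leaves at least two colours on each side.
\<close>

definition rainbow_on :: "nat \<Rightarrow> ('a \<Rightarrow> nat) \<Rightarrow> 'a set \<Rightarrow> bool" where
  "rainbow_on q c V \<longleftrightarrow> inj_on c V \<and> c ` V \<subseteq> {..<q}"

lemma rainbow_on_subset: "rainbow_on q c V \<Longrightarrow> W \<subseteq> V \<Longrightarrow> rainbow_on q c W"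
  unfolding rainbow_on_def by (auto intro: inj_on_subset)

lemma rainbow_on_cong: "(\<And>x. x \<in> V \<Longrightarrow> c' x = c x) \<Longrightarrow> rainbow_on q c' V \<longleftrightarrow> rainbow_on q c V"
  unfolding rainbow_on_def by (simp add: inj_on_def)

lemma rainbow_on_insert_fresh:
  assumes "rainbow_on q c W" "card W < q" "v \<notin> W"
  obtains col where "rainbow_on q (c(v := col)) (insert v W)"
proof -
  have inj: "inj_on c W" and im: "c ` W \<subseteq> {..<q}" using assms(1) unfolding rainbow_on_def by auto
  have "\<not> {..<q} \<subseteq> c ` W"
  proof
    assume "{..<q} \<subseteq> c ` W"
    then have "card {..<q} \<le> card (c ` W)" using im by (intro card_mono) (auto intro: finite_subset)
    then show False using assms(2) card_image[OF inj] by simp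
  qed
  then obtain col where col: "col < q" "col \<notin> c ` W" by auto
  have same: "(c(v := col)) ` W = c ` W" using assms(3) by auto
  have "rainbow_on q (c(v := col)) W \<longleftrightarrow> rainbow_on q c W" using assms(3) by (intro rainbow_on_cong) auto
  then have "inj_on (c(v := col)) W" using assms(1) unfolding rainbow_on_def by simp
  then have "rainbow_on q (c(v := col)) (insert v W)"
    using col assms(3) same im unfolding rainbow_on_def by simp
  then show thesis by (rule that)
qed

definition hits_colour_sets :: "nat \<Rightarrow> nat \<Rightarrow> ('a \<Rightarrow> nat) \<Rightarrow> 'a set \<Rightarrow> bool" where
  "hits_colour_sets q r c e \<longleftrightarrow> (\<forall>A \<subseteq> {..<q}. r \<le> card A \<longrightarrow> (\<exists>x\<in>e. c x \<in> A))"

lemma hits_colour_sets_mono: "hits_colour_sets q r c e \<Longrightarrow> r \<le> r' \<Longrightarrow> hits_colour_sets q r' c e"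
  unfolding hits_colour_sets_def by auto

lemma hits_colour_setsD:
  "hits_colour_sets q r c e \<Longrightarrow> A \<subseteq> {..<q} \<Longrightarrow> r \<le> card A \<Longrightarrow> \<exists>x\<in>e. c x \<in> A"
  unfolding hits_colour_sets_def by blast

lemma rainbow_on_hits_colour_sets:
  assumes "rainbow_on q c e" "q < card e + r"
  shows "hits_colour_sets q r c e"
  unfolding hits_colour_sets_def
proof (intro allI impI)
  fix A assume A: "A \<subseteq> {..<q}" "r \<le> card A"
  show "\<exists>x\<in>e. c x \<in> A"
  proof (rule ccontr)
    assume "\<not> ?thesis"
    then have disj: "c ` e \<inter> A = {}" by auto
    have inj: "inj_on c e" and im: "c ` e \<subseteq> {..<q}" using assms(1) unfolding rainbow_on_def by auto
    have "card e + card A = card (c ` e \<union> A)"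
      using disj im A(1) card_image[OF inj] by (simp add: card_Un_disjoint finite_subset)
    also have "\<dots> \<le> card {..<q}" using im A(1) by (intro card_mono) auto
    finally show False using assms(2) A(2) by simp
  qed
qed

lemma stacked_ball_seq_card:
  "stacked_ball_seq d Vs \<Longrightarrow> V \<in> set Vs \<Longrightarrow> finite V \<and> card V = d + 2"
  unfolding stacked_ball_seq_def by blast

lemma stacked_ball_seq_new_vertex:
  assumes "stacked_ball_seq d Vs" "1 \<le> k" "k < length Vs"
  obtains v W j where "Vs ! k = insert v W" "v \<notin> W" "card W = d + 1" "j < k" "W \<subseteq> Vs ! j"
    and "\<And>i. i < k \<Longrightarrow> v \<notin> Vs ! i"
proof -
  obtain W where W: "finite W" "card W = d + 1" "W \<subseteq> Vs ! k"
    and glue: "partial_ball Vs k \<inter> simplex (Vs ! k) = simplex W"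
    using assms unfolding stacked_ball_seq_def by blast
  have "W \<in> partial_ball Vs k" using glue unfolding simplex_def by blast
  then obtain j where j: "j < k" "W \<subseteq> Vs ! j" unfolding partial_ball_def simplex_def by auto
  have old: "x \<in> W" if "i < k" "x \<in> Vs ! i" "x \<in> Vs ! k" for i x
  proof -
    have "{x} \<in> partial_ball Vs k \<inter> simplex (Vs ! k)"
      using that unfolding partial_ball_def simplex_def by auto
    then show ?thesis using glue unfolding simplex_def by auto
  qed
  have "finite (Vs ! k)" "card (Vs ! k) = d + 2"
    using stacked_ball_seq_card[OF assms(1) nth_mem[OF assms(3)]] by auto
  then have "card (Vs ! k - W) = 1" using W by (simp add: card_Diff_subset)
  then obtain v where "Vs ! k - W = {v}" by (rule card_1_singletonE)
  then have v: "Vs ! k = insert v W" "v \<notin> W" using W(3) by auto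
  then have "v \<notin> Vs ! i" if "i < k" for i using old[OF that] by auto
  then show thesis using that v W(2) j by blast
qed

lemma stacked_ball_prefix_rainbow:
  assumes sb: "stacked_ball_seq d Vs"
  shows "k \<le> length Vs \<Longrightarrow> \<exists>c. \<forall>i<k. rainbow_on (d + 2) c (Vs ! i)"
proof (induction k)
  case 0
  then show ?case by simp
next
  case (Suc k)
  then have k: "k < length Vs" by simp
  show ?case
  proof (cases "k = 0")
    case True
    have fin: "finite (Vs ! k)" "card (Vs ! k) = d + 2"
      using stacked_ball_seq_card[OF sb nth_mem[OF k]] by auto
    obtain c where "bij_betw c (Vs ! k) {0..<card (Vs ! k)}"
      using ex_bij_betw_finite_nat[OF fin(1)] by blast
    then have "rainbow_on (d + 2) c (Vs ! k)"
      using fin(2) unfolding rainbow_on_def bij_betw_def by (simp add: atLeast0LessThan)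
    then show ?thesis using True by auto
  next
    case False
    obtain c where c: "\<forall>i<k. rainbow_on (d + 2) c (Vs ! i)" using Suc k by auto
    obtain v W j where v: "Vs ! k = insert v W" "v \<notin> W" and W: "card W = d + 1" "j < k" "W \<subseteq> Vs ! j"
      and fresh: "\<And>i. i < k \<Longrightarrow> v \<notin> Vs ! i"
      using stacked_ball_seq_new_vertex[OF sb _ k] False by auto
    have "rainbow_on (d + 2) c W" using c W(2,3) rainbow_on_subset by blast
    moreover have "card W < d + 2" using W(1) by simp
    ultimately obtain col where "rainbow_on (d + 2) (c(v := col)) (insert v W)"
      by (rule rainbow_on_insert_fresh[OF _ _ v(2)])
    then have new: "rainbow_on (d + 2) (c(v := col)) (Vs ! k)" using v(1) by simp
    have "rainbow_on (d + 2) (c(v := col)) (Vs ! i)" if "i < k" for i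
    proof -
      have "rainbow_on (d + 2) (c(v := col)) (Vs ! i) \<longleftrightarrow> rainbow_on (d + 2) c (Vs ! i)"
        using fresh[OF that] by (intro rainbow_on_cong) auto
      then show ?thesis using c that by simp
    qed
    then show ?thesis using new less_Suc_eq by auto
  qed
qed

lemma stacked_ball_rainbow_colouring:
  assumes "stacked_ball_seq d Vs"
  obtains c where "\<And>V. V \<in> set Vs \<Longrightarrow> rainbow_on (d + 2) c V"
proof -
  obtain c where "\<forall>i<length Vs. rainbow_on (d + 2) c (Vs ! i)"
    using stacked_ball_prefix_rainbow[OF assms order.refl] by blast
  then show thesis by (intro that) (auto simp: in_set_conv_nth)
qed

lemma facets_subset: "facets C \<subseteq> C"
  unfolding facets_def by blast

lemma facets_UN_simplex: "facets (\<Union>x\<in>I. simplex (f x)) \<subseteq> f ` I"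
proof
  fix e assume e: "e \<in> facets (\<Union>x\<in>I. simplex (f x))"
  then obtain x where "x \<in> I" "e \<subseteq> f x" unfolding facets_def simplex_def by auto
  moreover have "f x \<in> (\<Union>x\<in>I. simplex (f x))" using \<open>x \<in> I\<close> unfolding simplex_def by auto
  ultimately show "e \<in> f ` I" using e unfolding facets_def by auto
qed

lemma facets_partial_ball: "facets (partial_ball Vs (length Vs)) \<subseteq> set Vs"
proof -
  have "(!) Vs ` {..<length Vs} = set Vs" by (auto simp: in_set_conv_nth)
  then show ?thesis
    using facets_UN_simplex[of "(!) Vs" "{..<length Vs}"] unfolding partial_ball_def by simp
qed

lemma facets_boundary: "facets (boundary d Vs k) \<subseteq> boundary_faces d Vs k"
  using facets_UN_simplex[of id "boundary_faces d Vs k"] unfolding boundary_def by simp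

lemma boundary_faces_subset_partial_ball: "boundary_faces d Vs k \<subseteq> partial_ball Vs k"
  unfolding boundary_faces_def by blast

lemma Union_partial_ball: "\<Union>(partial_ball Vs k) = (\<Union>i<k. Vs ! i)"
  unfolding partial_ball_def simplex_def by blast

lemma real_le_divide_of_mult_le: "0 < q \<Longrightarrow> q * t \<le> m \<Longrightarrow> real t \<le> real m / real q"
  by (simp add: field_simps flip: of_nat_mult)

lemma exists_le_average:
  fixes f :: "'b \<Rightarrow> nat"
  assumes "finite S" "S \<noteq> {}"
  shows "\<exists>j\<in>S. card S * f j \<le> sum f S"
proof (rule ccontr)
  assume "\<not> ?thesis"
  then have "\<And>j. j \<in> S \<Longrightarrow> sum f S < card S * f j" by (simp add: not_le)
  then have "(\<Sum>j\<in>S. sum f S) < (\<Sum>j\<in>S. card S * f j)"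
    by (intro sum_strict_mono[OF assms])
  then show False by (simp add: sum_distrib_left)
qed

lemma two_below_average:
  fixes f :: "'b \<Rightarrow> nat"
  assumes "finite S" "2 \<le> card S"
  shows "\<exists>i\<in>S. \<exists>j\<in>S. i \<noteq> j \<and> card S * (f i + f j) \<le> 2 * sum f S"
proof -
  define p where "p = card S - 2"
  have p: "card S = p + 2" using assms(2) unfolding p_def by simp
  then have "S \<noteq> {}" by auto
  then obtain i where i: "i \<in> S" "card S * f i \<le> sum f S"
    using exists_le_average[OF assms(1)] by blast
  have "card (S - {i}) = p + 1" using i(1) assms(1) p by simp
  then have "S - {i} \<noteq> {}" using card_gt_0_iff by fastforce
  then obtain j where j: "j \<in> S - {i}" "card (S - {i}) * f j \<le> sum f (S - {i})"
    using exists_le_average[of "S - {i}"] assms(1) by blast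
  have "(p + 1) * f j + f i \<le> sum f S"
    using j \<open>card (S - {i}) = p + 1\<close> sum.remove[OF assms(1) i(1), of f] by simp
  \<comment> \<open>scaling this bound by \<open>p + 2\<close> and the bound on \<open>f i\<close> by \<open>p\<close> and adding gives \<open>p + 1\<close> times the claim\<close>
  then have "(p + 2) * ((p + 1) * f j + f i) \<le> (p + 2) * sum f S" by (rule mult_le_mono2)
  moreover have "p * ((p + 2) * f i) \<le> p * sum f S" using i(2) p by simp
  ultimately have "(p + 1) * ((p + 2) * (f i + f j)) \<le> (p + 1) * (2 * sum f S)"
    by (simp add: algebra_simps)
  then have "card S * (f i + f j) \<le> 2 * sum f S" unfolding p by (simp only: mult_le_cancel1)
  then show ?thesis using i(1) j(1) by (intro bexI[where x = i] bexI[where x = j] conjI) auto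
qed

lemma sum_card_colour_classes:
  assumes "finite U" "finite Q" "c ` U \<subseteq> Q"
  shows "(\<Sum>j\<in>Q. card {x\<in>U. c x = j}) = card U"
proof -
  have "U = (\<Union>j\<in>Q. {x\<in>U. c x = j})" using assms(3) by auto
  then show ?thesis using assms(1,2) by (subst (2) \<open>U = _\<close>, subst card_UN_disjoint) auto
qed

lemma tau_le_card: "finite T \<Longrightarrow> \<forall>e\<in>H. T \<inter> e \<noteq> {} \<Longrightarrow> tau H \<le> card T"
  unfolding tau_def by (rule Least_le) blast

lemma tau_le_sum_colour_classes:
  assumes "finite U" "finite A" "\<And>e. e \<in> H \<Longrightarrow> e \<subseteq> U \<and> (\<exists>x\<in>e. c x \<in> A)"
  shows "tau H \<le> (\<Sum>j\<in>A. card {x\<in>U. c x = j})"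
proof -
  let ?T = "\<Union>j\<in>A. {x\<in>U. c x = j}"
  have "tau H \<le> card ?T" using assms by (intro tau_le_card) auto
  also have "\<dots> \<le> (\<Sum>j\<in>A. card {x\<in>U. c x = j})" using assms(2) by (rule card_UN_le)
  finally show ?thesis .
qed

lemma tau_le_colour_class:
  assumes "finite U" "c ` U \<subseteq> {..<q}" "0 < q"
    and "\<And>e. e \<in> H \<Longrightarrow> e \<subseteq> U" "\<And>e. e \<in> H \<Longrightarrow> hits_colour_sets q 1 c e"
  shows "real (tau H) \<le> real (card U) / real q"
proof -
  define class_size where "class_size j = card {x\<in>U. c x = j}" for j
  have "(\<Sum>j<q. class_size j) = card U"
    unfolding class_size_def by (rule sum_card_colour_classes[OF assms(1) finite_lessThan assms(2)])
  then obtain j where j: "j < q" "q * class_size j \<le> card U"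
    using exists_le_average[of "{..<q}" class_size] assms(3) by auto
  have edges: "e \<subseteq> U \<and> (\<exists>x\<in>e. c x \<in> {j})" if "e \<in> H" for e
    using assms(4)[OF that] hits_colour_setsD[OF assms(5)[OF that], of "{j}"] j(1) by simp
  have "tau H \<le> (\<Sum>j'\<in>{j}. class_size j')"
    unfolding class_size_def by (rule tau_le_sum_colour_classes[OF assms(1) _ edges]) simp
  then have "q * tau H \<le> q * class_size j" by (intro mult_le_mono2) simp
  then have "q * tau H \<le> card U" using j(2) by (rule order_trans)
  then show ?thesis by (rule real_le_divide_of_mult_le[OF assms(3)])
qed

lemma tau_le_two_colour_classes:
  assumes "finite U" "c ` U \<subseteq> {..<q}" "2 \<le> q"
    and "\<And>e. e \<in> H \<Longrightarrow> e \<subseteq> U" "\<And>e. e \<in> H \<Longrightarrow> hits_colour_sets q 2 c e"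
  shows "real (tau H) \<le> 2 * real (card U) / real q"
proof -
  define class_size where "class_size j = card {x\<in>U. c x = j}" for j
  have "(\<Sum>j<q. class_size j) = card U"
    unfolding class_size_def by (rule sum_card_colour_classes[OF assms(1) finite_lessThan assms(2)])
  then obtain j1 j2 where j: "j1 < q" "j2 < q" "j1 \<noteq> j2" "q * (class_size j1 + class_size j2) \<le> 2 * card U"
    using two_below_average[of "{..<q}" class_size] assms(3) by auto
  have edges: "e \<subseteq> U \<and> (\<exists>x\<in>e. c x \<in> {j1, j2})" if "e \<in> H" for e
    using assms(4)[OF that] hits_colour_setsD[OF assms(5)[OF that], of "{j1, j2}"] j(1-3) by simp
  have "tau H \<le> (\<Sum>j\<in>{j1, j2}. class_size j)"
    unfolding class_size_def by (rule tau_le_sum_colour_classes[OF assms(1) _ edges]) simp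
  then have "q * tau H \<le> q * (class_size j1 + class_size j2)" using j(3) by (intro mult_le_mono2) simp
  then have "q * tau H \<le> 2 * card U" using j(4) by (rule order_trans)
  then have "real (tau H) \<le> real (2 * card U) / real q"
    by (rule real_le_divide_of_mult_le[rotated]) (use assms(3) in simp)
  then show ?thesis by simp
qed

lemma two_colorable_if_hits_colour_sets:
  assumes "4 \<le> q" "\<And>e. e \<in> H \<Longrightarrow> hits_colour_sets q 2 c e"
  shows "two_colorable H"
  unfolding two_colorable_def
proof (intro exI[of _ "\<lambda>x. c x < 2"] ballI)
  fix e assume "e \<in> H"
  have "{0, 1} \<subseteq> {..<q}" "{2, 3} \<subseteq> {..<q}" "2 \<le> card {0, 1::nat}" "2 \<le> card {2, 3::nat}"
    using assms(1) by auto
  then obtain x y where "x \<in> e" "c x \<in> {0, 1}" "y \<in> e" "c y \<in> {2, 3}"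
    using hits_colour_setsD[OF assms(2)[OF \<open>e \<in> H\<close>]] by meson
  then show "\<exists>x\<in>e. \<exists>y\<in>e. (c x < 2) \<noteq> (c y < 2)"
    by (intro bexI[where x = x] bexI[where x = y]) auto
qed

lemma stacked_ball_facets_hit_colours:
  assumes "stacked_ball_seq d Vs" "\<And>V. V \<in> set Vs \<Longrightarrow> rainbow_on (d + 2) c V"
    and "e \<in> facets (partial_ball Vs (length Vs))"
  shows "hits_colour_sets (d + 2) 1 c e"
proof -
  have "e \<in> set Vs" using assms(3) facets_partial_ball by blast
  then show ?thesis
    using assms(2) stacked_ball_seq_card[OF assms(1)] by (intro rainbow_on_hits_colour_sets) auto
qed

lemma stacked_boundary_facets_hit_colours:
  assumes "\<And>V. V \<in> set Vs \<Longrightarrow> rainbow_on (d + 2) c V"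
    and "e \<in> facets (boundary d Vs (length Vs))"
  shows "hits_colour_sets (d + 2) 2 c e"
proof -
  have "e \<in> boundary_faces d Vs (length Vs)" using assms(2) facets_boundary by blast
  then obtain i where i: "i < length Vs" "e \<subseteq> Vs ! i" and "card e = d + 1"
    unfolding boundary_faces_def partial_ball_def simplex_def by auto
  have "rainbow_on (d + 2) c e" using assms(1)[OF nth_mem[OF i(1)]] i(2) by (rule rainbow_on_subset)
  then show ?thesis using \<open>card e = d + 1\<close> by (intro rainbow_on_hits_colour_sets) auto
qed

theorem proposition3p2:
  fixes d n :: nat and Vs :: "'a set list" and B K :: "'a set set"
  assumes "d \<ge> 2"
    and "stacked_ball_seq d Vs"
    and "B = partial_ball Vs (length Vs)"
    and "K = boundary d Vs (length Vs)"
    and "n = card (\<Union>B)"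
  shows "real (tau (facets B)) \<le> real n / real (d + 2)
       \<and> real (tau (facets K)) \<le> 2 * real n / real (d + 2)
       \<and> two_colorable (facets B) \<and> two_colorable (facets K)"
proof -
  obtain c where c: "\<And>V. V \<in> set Vs \<Longrightarrow> rainbow_on (d + 2) c V"
    using stacked_ball_rainbow_colouring[OF assms(2)] by blast
  have U: "\<Union>B = (\<Union>i<length Vs. Vs ! i)" using assms(3) Union_partial_ball by simp
  have fin: "finite (\<Union>B)" using U stacked_ball_seq_card[OF assms(2)] by auto
  have colours: "c ` \<Union>B \<subseteq> {..<d + 2}" unfolding U using c nth_mem unfolding rainbow_on_def by blast
  have B_edges: "e \<subseteq> \<Union>B" "hits_colour_sets (d + 2) 1 c e" if "e \<in> facets B" for e
    using that facets_subset stacked_ball_facets_hit_colours[OF assms(2) c] assms(3) by auto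
  have K_edges: "e \<subseteq> \<Union>B" "hits_colour_sets (d + 2) 2 c e" if "e \<in> facets K" for e
    using that facets_boundary boundary_faces_subset_partial_ball
      stacked_boundary_facets_hit_colours[OF c] assms(3,4) by blast+
  have "real (tau (facets B)) \<le> real n / real (d + 2)"
    using tau_le_colour_class[OF fin colours _ B_edges] assms(5) by simp
  moreover have "real (tau (facets K)) \<le> 2 * real n / real (d + 2)"
    using tau_le_two_colour_classes[OF fin colours _ K_edges] assms(5) by simp
  moreover have "hits_colour_sets (d + 2) 2 c e" if "e \<in> facets B" for e
    using hits_colour_sets_mono[OF B_edges(2)[OF that]] by simp
  moreover have "4 \<le> d + 2" using assms(1) by simp
  ultimately show ?thesis
    using K_edges(2) two_colorable_if_hits_colour_sets[of "d + 2" _ c] by blast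
qed

end
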